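(* If $R \subseteq \mathbb{N}$ is Turing computable and $A \subseteq \mathbb{N}$ is bi-immune, then the image set $\sigma_R(A) = \{\sigma_R(a) : a \in A\}$ is bi-immune.
   Context: $\mathbb{N}$ denotes the non-negative integers; $g \circ f$ means apply $f$ first. For $i \in \mathbb{N}$, $\sigma_{(i)}$ is the permutation of $\mathbb{N}$ swapping $i$ and $i+1$ and fixing all other numbers. For $R \subseteq \mathbb{N}$ with increasing enumeration $r_0 < r_1 < \cdots$, define $\sigma_R : \mathbb{N} \to \mathbb{N}$ by $\sigma_R(x) = \lim_{n \to \infty} (\sigma_{(r_0)} \circ \sigma_{(r_1)} \circ \cdots \circ \sigma_{(r_n)})(x)$ (eventually constant for each $x$; for finite $R$ it is the finite composition, $\sigma_\emptyset = \mathrm{id}$). A set $A$ is immune if it is infinite and contains no infinite computably enumerable subset; $A$ is bi-immune if both $A$ and $\mathbb{N} - A$ are immune. *)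

theory Defs
  imports Main
begin

datatype recf =
    Zr
  | Sc
  | Pj nat
  | Cn recf "recf list"
  | Pr recf recf
  | Mn recf

inductive evalr :: "recf \<Rightarrow> nat list \<Rightarrow> nat \<Rightarrow> bool" where
  zero: "evalr Zr xs 0"
| succ: "evalr Sc (x # xs) (Suc x)"
| proj: "i < length xs \<Longrightarrow> evalr (Pj i) xs (xs ! i)"
| comp: "list_all2 (\<lambda>g y. evalr g xs y) gs ys \<Longrightarrow> evalr f ys z \<Longrightarrow> evalr (Cn f gs) xs z"
| prim0: "evalr f xs z \<Longrightarrow> evalr (Pr f g) (0 # xs) z"
| primS: "evalr (Pr f g) (n # xs) y \<Longrightarrow> evalr g (n # y # xs) z \<Longrightarrow> evalr (Pr f g) (Suc n # xs) z"
| mu: "evalr f (n # xs) 0 \<Longrightarrow> (\<forall>m<n. \<exists>y. evalr f (m # xs) (Suc y)) \<Longrightarrow> evalr (Mn f) xs n"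

definition computable_set :: "nat set \<Rightarrow> bool" where
  "computable_set R \<longleftrightarrow> (\<exists>f. \<forall>x. evalr f [x] (if x \<in> R then 1 else 0))"

definition ce_set :: "nat set \<Rightarrow> bool" where
  "ce_set W \<longleftrightarrow> (\<exists>f. W = {x. \<exists>y. evalr f [x] y})"

definition immune :: "nat set \<Rightarrow> bool" where
  "immune A \<longleftrightarrow> infinite A \<and> \<not> (\<exists>W. W \<subseteq> A \<and> infinite W \<and> ce_set W)"

definition bi_immune :: "nat set \<Rightarrow> bool" where
  "bi_immune A \<longleftrightarrow> immune A \<and> immune (UNIV - A)"

definition sw :: "nat \<Rightarrow> nat \<Rightarrow> nat" where
  "sw i x = (if x = i then Suc i else if x = Suc i then i else x)"

text \<open>sigma_pref R n = sigma_(r_0) o ... o sigma_(r_k), where r_0 < ... < r_k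
  are the elements of R below n (the composition is the identity if there are none).\<close>
fun sigma_pref :: "nat set \<Rightarrow> nat \<Rightarrow> nat \<Rightarrow> nat" where
  "sigma_pref R 0 = id"
| "sigma_pref R (Suc n) = (if n \<in> R then sigma_pref R n \<circ> sw n else sigma_pref R n)"

definition sigmaR :: "nat set \<Rightarrow> nat \<Rightarrow> nat" where
  "sigmaR R x = (THE y. eventually (\<lambda>n. sigma_pref R n x = y) sequentially)"

end

theory Submission
  imports Defs
begin

text \<open>Explicitly, \<open>\<sigma>\<^sub>R(x) = x + 1\<close> for \<open>x \<in> R\<close>, and otherwise \<open>\<sigma>\<^sub>R(x)\<close> is the least \<open>y\<close> with
  \<open>[y, x) \<subseteq> R\<close>. Hence \<open>\<sigma>\<^sub>R\<close> is an injection computable from \<open>R\<close>, and since \<open>\<sigma>\<^sub>R(x) \<le> x + 1\<close>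
  its range misses at most one number. An infinite c.e. subset \<open>W\<close> of \<open>\<sigma>\<^sub>R(A)\<close> or of its
  complement then pulls back along \<open>\<sigma>\<^sub>R\<close> to a c.e. subset of \<open>A\<close> or of its complement,
  which is infinite because \<open>W\<close> lies in the image of the pullback up to a finite set.\<close>

inductive_cases evalr_ZrE: "evalr Zr xs y"
inductive_cases evalr_ScE: "evalr Sc xs y"
inductive_cases evalr_PjE: "evalr (Pj i) xs y"
inductive_cases evalr_CnE: "evalr (Cn f gs) xs y"
inductive_cases evalr_Pr0E: "evalr (Pr f g) (0 # xs) y"
inductive_cases evalr_PrSE: "evalr (Pr f g) (Suc n # xs) y"
inductive_cases evalr_MnE: "evalr (Mn f) xs y"

lemma evalr_functional: "evalr f xs y \<Longrightarrow> evalr f xs y' \<Longrightarrow> y = y'"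
proof (induction arbitrary: y' rule: evalr.induct)
  case (comp xs gs ys f z)
  from comp.prems obtain ys' where ys': "list_all2 (\<lambda>g y. evalr g xs y) gs ys'"
    and z': "evalr f ys' y'"
    by (rule evalr_CnE)
  from comp.IH(1) ys' have "ys = ys'"
    by (auto simp: list_all2_conv_all_nth intro: nth_equalityI)
  with z' comp.IH(2) show ?case by blast
next
  case (mu f n xs)
  from mu.prems have zero: "evalr f (y' # xs) 0"
    and below: "\<forall>m<y'. \<exists>y. evalr f (m # xs) (Suc y)"
    by (auto elim: evalr_MnE)
  show ?case
  proof (rule ccontr)
    assume "n \<noteq> y'"
    then consider "n < y'" | "y' < n" by linarith
    then show False
    proof cases
      case 1
      with below obtain y where "evalr f (n # xs) (Suc y)" by blast
      with mu.IH(1) show False by blast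
    next
      case 2
      with mu.IH(2) obtain y where "evalr f (y' # xs) (Suc y)"
        "\<forall>w. evalr f (y' # xs) w \<longrightarrow> Suc y = w" by blast
      with zero show False by blast
    qed
  qed
next
  case (primS f g n xs y z)
  from primS.prems obtain y2 where "evalr (Pr f g) (n # xs) y2" "evalr g (n # y2 # xs) y'"
    by (rule evalr_PrSE)
  with primS.IH show ?case by blast
next
  case (prim0 f xs z g)
  from prim0.prems show ?case
    by (elim evalr_Pr0E) (rule prim0.IH)
qed (auto elim: evalr_ZrE evalr_ScE evalr_PjE)

definition computable_fun :: "(nat \<Rightarrow> nat) \<Rightarrow> bool" where
  "computable_fun f \<longleftrightarrow> (\<exists>g. \<forall>x. evalr g [x] (f x))"

lemma ce_set_vimage:
  assumes "computable_fun f" and "ce_set W"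
  shows "ce_set (f -` W)"
proof -
  from assms obtain g h where g: "\<And>x. evalr g [x] (f x)" and W: "W = {x. \<exists>y. evalr h [x] y}"
    unfolding computable_fun_def ce_set_def by blast
  have "evalr (Cn h [g]) [x] y \<longleftrightarrow> evalr h [f x] y" for x y
  proof
    assume "evalr (Cn h [g]) [x] y"
    then obtain u where "evalr g [x] u" "evalr h [u] y"
      by (auto elim!: evalr_CnE simp: list_all2_Cons1)
    with g evalr_functional show "evalr h [f x] y" by blast
  next
    assume "evalr h [f x] y"
    with g show "evalr (Cn h [g]) [x] y"
      by (intro evalr.comp[where ys = "[f x]"]) auto
  qed
  then have "f -` W = {x. \<exists>y. evalr (Cn h [g]) [x] y}"
    using W by auto
  then show ?thesis
    unfolding ce_set_def by blast
qed

lemma immune_if_image_subset_image_Un_compl_range: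
  assumes f: "computable_fun f" "inj f" "finite (UNIV - range f)"
    and B: "immune B"
    and lower: "f ` B \<subseteq> C" and upper: "C \<subseteq> f ` B \<union> (UNIV - range f)"
  shows "immune C"
proof -
  have "infinite C"
    using B lower finite_imageD[of f B] inj_on_subset[OF \<open>inj f\<close>]
    by (meson finite_subset immune_def subset_UNIV)
  moreover have "\<not> (W \<subseteq> C \<and> infinite W \<and> ce_set W)" for W
  proof
    assume W: "W \<subseteq> C \<and> infinite W \<and> ce_set W"
    have "f -` W \<subseteq> B"
      using W upper injD[OF \<open>inj f\<close>] by blast
    moreover have "infinite (f -` W)"
    proof
      assume "finite (f -` W)"
      moreover have "W \<subseteq> f ` (f -` W) \<union> (UNIV - range f)"
        by auto
      ultimately show False
        using W f(3) by (meson finite_Un finite_imageI finite_subset)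
    qed
    moreover have "ce_set (f -` W)"
      using ce_set_vimage f(1) W by blast
    ultimately show False
      using B unfolding immune_def by blast
  qed
  ultimately show ?thesis
    unfolding immune_def by blast
qed

lemma bi_immune_image:
  assumes "computable_fun f" "inj f" "finite (UNIV - range f)" and "bi_immune A"
  shows "bi_immune (f ` A)"
proof -
  have "f ` (UNIV - A) \<subseteq> UNIV - f ` A"
    using inj_image_Compl_subset[OF \<open>inj f\<close>] by (simp add: Compl_eq_Diff_UNIV)
  then show ?thesis
    using assms unfolding bi_immune_def
    by (blast intro: immune_if_image_subset_image_Un_compl_range)
qed

lemma finite_compl_range_if_le_Suc:
  assumes "inj f" and le: "\<And>x. f x \<le> Suc x"
  shows "finite (UNIV - range f)"
proof (rule ccontr)
  assume "infinite (UNIV - range f)"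
  then obtain S where S: "S \<subseteq> UNIV - range f" "finite S" "card S = 2"
    by (meson infinite_arbitrarily_large)
  define n where "n = Suc (Max S)"
  have "S \<subseteq> {..n}"
    using S(2) by (auto simp: n_def le_SucI)
  moreover have "f ` {..<n} \<subseteq> {..n}"
    using le by (fastforce intro: order_trans Suc_leI)
  ultimately have "S \<union> f ` {..<n} \<subseteq> {..n}"
    by blast
  then have "card (S \<union> f ` {..<n}) \<le> Suc n"
    using card_mono[of "{..n}"] by fastforce
  moreover have "card (f ` {..<n}) = n"
    using card_image[OF inj_on_subset[OF \<open>inj f\<close>]] by simp
  then have "card (S \<union> f ` {..<n}) = 2 + n"
    using S card_Un_disjoint[OF S(2), of "f ` {..<n}"] by auto
  ultimately show False
    by simp
qed

lemma sigma_pref_above: "k < y \<Longrightarrow> sigma_pref R k y = y"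
  by (induction k) (auto simp: sw_def)

lemma sigma_pref_stable: "x < n \<Longrightarrow> sigma_pref R n x = sigma_pref R (Suc x) x"
  by (induction n) (auto simp: sw_def less_Suc_eq)

lemma sigmaR_eq_sigma_pref: "sigmaR R x = sigma_pref R (Suc x) x"
  unfolding sigmaR_def
proof (rule the_equality)
  show "\<forall>\<^sub>F n in sequentially. sigma_pref R n x = sigma_pref R (Suc x) x"
    unfolding eventually_sequentially using sigma_pref_stable by (metis Suc_le_eq)
next
  fix y assume "\<forall>\<^sub>F n in sequentially. sigma_pref R n x = y"
  then obtain N where "\<forall>n\<ge>N. sigma_pref R n x = y"
    unfolding eventually_sequentially by blast
  then show "y = sigma_pref R (Suc x) x"
    using sigma_pref_stable[of x "max N (Suc x)" R] by simp
qed

fun run_start :: "nat set \<Rightarrow> nat \<Rightarrow> nat" where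
  "run_start R 0 = 0"
| "run_start R (Suc k) = (if k \<in> R then run_start R k else Suc k)"

lemma sigma_pref_diag: "sigma_pref R k k = run_start R k"
  by (induction k) (auto simp: sigma_pref_above sw_def)

lemma sigmaR_eq: "sigmaR R x = (if x \<in> R then Suc x else run_start R x)"
  using sigma_pref_above[of x "Suc x" R] sigma_pref_diag[of R x]
  by (simp add: sigmaR_eq_sigma_pref sw_def)

lemma run_start_le: "run_start R x \<le> x"
  by (induction x) auto

lemma sigmaR_le_Suc: "sigmaR R x \<le> Suc x"
  using run_start_le[of R x] by (simp add: sigmaR_eq)

lemma inj_sigma_pref: "inj (sigma_pref R n)"
proof (induction n)
  case (Suc n)
  have "inj (sw n)"
    unfolding inj_def sw_def by auto
  with Suc show ?case
    by (simp add: inj_compose)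
qed simp

lemma inj_sigmaR: "inj (sigmaR R)"
proof (rule injI)
  fix x y assume "sigmaR R x = sigmaR R y"
  then have "sigma_pref R (Suc (max x y)) x = sigma_pref R (Suc (max x y)) y"
    using sigma_pref_stable[of x "Suc (max x y)" R] sigma_pref_stable[of y "Suc (max x y)" R]
    by (simp add: sigmaR_eq_sigma_pref)
  then show "x = y"
    using inj_sigma_pref injD by metis
qed

lemma evalr_PjI: "i < length xs \<Longrightarrow> y = xs ! i \<Longrightarrow> evalr (Pj i) xs y"
  using evalr.proj by simp

lemma evalr_Cn1: "evalr g xs y \<Longrightarrow> evalr f [y] z \<Longrightarrow> evalr (Cn f [g]) xs z"
  by (rule evalr.comp[where ys = "[y]"]) auto

lemma evalr_Cn3:
  "evalr g1 xs y1 \<Longrightarrow> evalr g2 xs y2 \<Longrightarrow> evalr g3 xs y3 \<Longrightarrow> evalr f [y1, y2, y3] z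
    \<Longrightarrow> evalr (Cn f [g1, g2, g3]) xs z"
  by (rule evalr.comp[where ys = "[y1, y2, y3]"]) auto

definition if_prog :: recf where
  "if_prog = Pr (Pj 1) (Pj 2)"

lemma evalr_if_prog: "evalr if_prog [n, a, b] (if n = 0 then b else a)"
proof (induction n)
  case 0
  then show ?case
    unfolding if_prog_def by (auto intro!: evalr.prim0 evalr_PjI)
next
  case (Suc n)
  then obtain y where "evalr (Pr (Pj 1) (Pj 2)) [n, a, b] y"
    unfolding if_prog_def by blast
  then show ?case
    unfolding if_prog_def by (auto intro!: evalr.primS evalr_PjI)
qed

definition run_start_prog :: "recf \<Rightarrow> recf" where
  "run_start_prog c = Pr Zr (Cn if_prog [Cn c [Pj 0], Pj 1, Cn Sc [Pj 0]])"

definition sigma_prog :: "recf \<Rightarrow> recf" where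
  "sigma_prog c = Cn if_prog [Cn c [Pj 0], Cn Sc [Pj 0], Cn (run_start_prog c) [Pj 0]]"

context
  fixes R :: "nat set" and c :: recf
  assumes c: "\<And>x. evalr c [x] (if x \<in> R then 1 else 0)"
begin

lemma evalr_c_Pj0: "evalr (Cn c [Pj 0]) (x # xs) (if x \<in> R then 1 else 0)"
  by (rule evalr_Cn1[OF _ c]) (simp add: evalr_PjI)

lemma evalr_Sc_Pj0: "evalr (Cn Sc [Pj 0]) (x # xs) (Suc x)"
  by (rule evalr_Cn1[OF _ evalr.succ]) (simp add: evalr_PjI)

lemma evalr_run_start_prog: "evalr (run_start_prog c) [k] (run_start R k)"
proof (induction k)
  case 0
  then show ?case
    unfolding run_start_prog_def by (auto intro: evalr.prim0 evalr.zero)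
next
  case (Suc k)
  have "evalr (Cn if_prog [Cn c [Pj 0], Pj 1, Cn Sc [Pj 0]]) [k, run_start R k] (run_start R (Suc k))"
    using evalr_if_prog[of "if k \<in> R then 1 else 0" "run_start R k" "Suc k"]
    by (intro evalr_Cn3[OF evalr_c_Pj0 _ evalr_Sc_Pj0]) (auto intro: evalr_PjI)
  with Suc show ?case
    unfolding run_start_prog_def by (auto intro: evalr.primS)
qed

lemma evalr_sigma_prog: "evalr (sigma_prog c) [x] (sigmaR R x)"
  unfolding sigma_prog_def sigmaR_eq
  using evalr_if_prog[of "if x \<in> R then 1 else 0" "Suc x" "run_start R x"]
  by (intro evalr_Cn3[OF evalr_c_Pj0 evalr_Sc_Pj0 evalr_Cn1[OF _ evalr_run_start_prog]])
    (auto intro: evalr_PjI)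

end

lemma computable_fun_sigmaR: "computable_set R \<Longrightarrow> computable_fun (sigmaR R)"
  unfolding computable_set_def computable_fun_def using evalr_sigma_prog by blast

theorem mainTheorem11:
  fixes R A :: "nat set"
  assumes "computable_set R"
    and "bi_immune A"
  shows "bi_immune (sigmaR R ` A)"
proof (rule bi_immune_image)
  show "computable_fun (sigmaR R)"
    using assms(1) by (rule computable_fun_sigmaR)
  show "inj (sigmaR R)"
    by (rule inj_sigmaR)
  show "finite (UNIV - range (sigmaR R))"
    using inj_sigmaR sigmaR_le_Suc by (rule finite_compl_range_if_le_Suc)
qed (fact assms(2))

end
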